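(* Let $G=(V,E)$ be a directed graph on $n$ vertices in which every vertex has at least one out-neighbor, accessible only through Jump and RandomCrawl queries, let $\alpha\in(0,1)$ be a fixed constant (the teleportation probability), and let $1\le \Delta\le n$. Then the running time (number of queries plus all computation) of the algorithm ApproximatePageRank described below, run on $G$ with threshold $\Delta$, is at most $\tilde{O}(n/\Delta)$, where $\tilde{O}$ hides factors polylogarithmic in $n$ and the dependence on $\alpha$ is ignored.
   Context: Query model: a Jump query takes no input and returns a vertex of $G$ chosen uniformly at random; a RandomCrawl query takes a vertex $v$ and returns an out-neighbor of $v$ chosen uniformly at random. All logarithms are base 2. Subroutine ApproxRow$(v,\epsilon,\rho)$ (with $0<\epsilon,\rho<1$): set $\ell=\log_{1/(1-\alpha)}(4/\epsilon)$ and $r=16\log(n)/(\epsilon\rho^2)$. Repeat $r$ times: run a walk starting at $v$ in which at each step, with probability $\alpha$ the walk makes a termination step (and stops), and with probability $1-\alpha$ it moves to RandomCrawl of its current vertex; the walk is artificially stopped after $\ell$ steps if it has not terminated. If the walk made a termination step while at vertex $u$, add 1 to a counter of $u$ (stored in a binary search tree keyed by vertex identity). Output every vertex with a nonzero counter together with its counter divided by $r$ (its estimated value). Algorithm ApproximatePageRank (input $\Delta$): maintain a binary search tree ChunkTree of counters keyed by pairs (vertex, scale). For $t=0,1,\dots,\log(4n/\Delta)$: set $\epsilon_t=2^{-t}$; repeat $4\,\epsilon_t (n/\Delta)\log^2(n)$ times: Jump to a random vertex $v$, call ApproxRow$(v,\epsilon_t/2,1/2)$, and for each vertex $j$ in the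 returned list (whose estimated value lies in the chunk of scale $\epsilon_t$, i.e. in $[\epsilon_t,2\epsilon_t)$) add 1 to the counter with key $(j,\epsilon_t)$, creating it with value 1 if absent. Second part: for every key $(j,\epsilon)$ in ChunkTree whose counter value is at least $\tfrac12\log n$, add $\frac{\Delta}{2\epsilon\log^2(n)}$ to an accumulator of $j$ (stored in a binary search tree keyed by vertex). Finally output every vertex whose accumulator is at least $\Delta/4$, together with its accumulated value. *)

theory Defs
  imports Complex_Main
begin

(* A graph on vertices {0..<n} is given by an out-neighbour list
   function  out :: nat => nat list.  Randomness is an infinite sequence
   rs :: nat => real of samples from [0,1); each random decision consumes one sample:
     - Jump:             vertex  nat (floor (u * n))
     - RandomCrawl v:    out v ! nat (floor (u * length (out v)))
     - termination coin: terminate iff u < alpha.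
   Every query / coin / elementary step costs 1; every operation on a balanced
   binary search tree of current size s costs bst_op_cost s.
   Trees are represented (semantically) by association lists. *)

definition bst_op_cost :: "nat \<Rightarrow> nat" where
  "bst_op_cost s = nat \<lceil>log 2 (real s + 2)\<rceil>"

fun incr :: "'k \<Rightarrow> ('k \<times> nat) list \<Rightarrow> ('k \<times> nat) list" where
  "incr k [] = [(k, 1)]"
| "incr k ((k', c) # xs) = (if k = k' then (k', c + 1) # xs else (k', c) # incr k xs)"

fun addto :: "'k \<Rightarrow> real \<Rightarrow> ('k \<times> real) list \<Rightarrow> ('k \<times> real) list" where
  "addto k x [] = [(k, x)]"
| "addto k x ((k', y) # xs) = (if k = k' then (k', y + x) # xs else (k', y) # addto k x xs)"

definition jump :: "nat \<Rightarrow> real \<Rightarrow> nat" where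
  "jump n u = nat \<lfloor>u * real n\<rfloor>"

definition crawl :: "(nat \<Rightarrow> nat list) \<Rightarrow> nat \<Rightarrow> real \<Rightarrow> nat" where
  "crawl out v u = out v ! nat \<lfloor>u * real (length (out v))\<rfloor>"

(* one truncated walk with k steps left: result = (vertex where termination step happened, cost, next position) *)
fun walk :: "(nat \<Rightarrow> nat list) \<Rightarrow> real \<Rightarrow> (nat \<Rightarrow> real) \<Rightarrow> nat \<Rightarrow> nat \<Rightarrow> nat
              \<Rightarrow> nat option \<times> nat \<times> nat" where
  "walk out \<alpha> rs 0 v p = (None, 1, p)"
| "walk out \<alpha> rs (Suc k) v p =
     (if rs p < \<alpha> then (Some v, 1, Suc p)
      else (let u = crawl out v (rs (Suc p));
                (res, c, p') = walk out \<alpha> rs k u (p + 2)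
            in (res, c + 2, p')))"

fun row_loop :: "(nat \<Rightarrow> nat list) \<Rightarrow> real \<Rightarrow> (nat \<Rightarrow> real) \<Rightarrow> nat \<Rightarrow> nat \<Rightarrow> nat
                  \<Rightarrow> (nat \<times> nat) list \<Rightarrow> nat \<Rightarrow> (nat \<times> nat) list \<times> nat \<times> nat" where
  "row_loop out \<alpha> rs len v 0 T p = (T, 1, p)"
| "row_loop out \<alpha> rs len v (Suc j) T p =
     (let (res, c, p1) = walk out \<alpha> rs len v p;
          (T1, c1) = (case res of None \<Rightarrow> (T, 0)
                                | Some u \<Rightarrow> (incr u T, bst_op_cost (length T)));
          (T2, c2, p2) = row_loop out \<alpha> rs len v j T1 p1
      in (T2, c + c1 + c2 + 1, p2))"

definition row_len :: "real \<Rightarrow> real \<Rightarrow> nat" where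
  "row_len \<alpha> \<epsilon> = nat \<lceil>log (1 / (1 - \<alpha>)) (4 / \<epsilon>)\<rceil>"

definition row_reps :: "nat \<Rightarrow> real \<Rightarrow> real \<Rightarrow> nat" where
  "row_reps n \<epsilon> \<rho> = nat \<lceil>16 * log 2 (real n) / (\<epsilon> * \<rho>\<^sup>2)\<rceil>"

definition approx_row :: "(nat \<Rightarrow> nat list) \<Rightarrow> nat \<Rightarrow> real \<Rightarrow> (nat \<Rightarrow> real) \<Rightarrow> nat
                          \<Rightarrow> real \<Rightarrow> real \<Rightarrow> nat \<Rightarrow> (nat \<times> real) list \<times> nat \<times> nat" where
  "approx_row out n \<alpha> rs v \<epsilon> \<rho> p =
     (let len = row_len \<alpha> \<epsilon>; r = row_reps n \<epsilon> \<rho>;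
          (T, c, p') = row_loop out \<alpha> rs len v r [] p
      in (map (\<lambda>(u, k). (u, real k / real r)) T, c + length T + 1, p'))"

(* ChunkTree keyed by (vertex, t), representing the pair (vertex, scale eps_t = 2^-t) *)
fun add_chunks :: "nat \<Rightarrow> real \<Rightarrow> (nat \<times> real) list \<Rightarrow> ((nat \<times> nat) \<times> nat) list
                    \<Rightarrow> ((nat \<times> nat) \<times> nat) list \<times> nat" where
  "add_chunks t \<epsilon> [] CT = (CT, 1)"
| "add_chunks t \<epsilon> ((j, x) # L) CT =
     (let (CT1, c1) = (if \<epsilon> \<le> x \<and> x < 2 * \<epsilon>
                        then (incr (j, t) CT, bst_op_cost (length CT)) else (CT, 0));
          (CT2, c2) = add_chunks t \<epsilon> L CT1
      in (CT2, 1 + c1 + c2))"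

fun chunk_loop :: "(nat \<Rightarrow> nat list) \<Rightarrow> nat \<Rightarrow> real \<Rightarrow> (nat \<Rightarrow> real) \<Rightarrow> nat \<Rightarrow> nat
                    \<Rightarrow> ((nat \<times> nat) \<times> nat) list \<Rightarrow> nat \<Rightarrow> ((nat \<times> nat) \<times> nat) list \<times> nat \<times> nat" where
  "chunk_loop out n \<alpha> rs t 0 CT p = (CT, 1, p)"
| "chunk_loop out n \<alpha> rs t (Suc m) CT p =
     (let v = jump n (rs p); \<epsilon> = (1/2) ^ t;
          (L, c1, p1) = approx_row out n \<alpha> rs v (\<epsilon> / 2) (1/2) (Suc p);
          (CT2, c2) = add_chunks t \<epsilon> L CT;
          (CT3, c3, p3) = chunk_loop out n \<alpha> rs t m CT2 p1
      in (CT3, 2 + c1 + c2 + c3, p3))"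

definition chunk_reps :: "nat \<Rightarrow> real \<Rightarrow> nat \<Rightarrow> nat" where
  "chunk_reps n \<Delta> t = nat \<lceil>4 * (1/2) ^ t * (real n / \<Delta>) * (log 2 (real n))\<^sup>2\<rceil>"

fun scale_loop :: "(nat \<Rightarrow> nat list) \<Rightarrow> nat \<Rightarrow> real \<Rightarrow> real \<Rightarrow> (nat \<Rightarrow> real) \<Rightarrow> nat \<Rightarrow> nat
                    \<Rightarrow> ((nat \<times> nat) \<times> nat) list \<Rightarrow> nat \<Rightarrow> ((nat \<times> nat) \<times> nat) list \<times> nat \<times> nat" where
  "scale_loop out n \<alpha> \<Delta> rs t 0 CT p = (CT, 1, p)"
| "scale_loop out n \<alpha> \<Delta> rs t (Suc k) CT p =
     (let (CT1, c1, p1) = chunk_loop out n \<alpha> rs t (chunk_reps n \<Delta> t) CT p;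
          (CT2, c2, p2) = scale_loop out n \<alpha> \<Delta> rs (Suc t) k CT1 p1
      in (CT2, c1 + c2 + 1, p2))"

fun accum :: "nat \<Rightarrow> real \<Rightarrow> ((nat \<times> nat) \<times> nat) list \<Rightarrow> (nat \<times> real) list
               \<Rightarrow> (nat \<times> real) list \<times> nat" where
  "accum n \<Delta> [] A = (A, 1)"
| "accum n \<Delta> (((j, t), c) # xs) A =
     (let (A1, c1) = (if real c \<ge> log 2 (real n) / 2
                      then (addto j (\<Delta> / (2 * (1/2) ^ t * (log 2 (real n))\<^sup>2)) A,
                            bst_op_cost (length A))
                      else (A, 0));
          (A2, c2) = accum n \<Delta> xs A1
      in (A2, 1 + c1 + c2))"

definition num_scales :: "nat \<Rightarrow> real \<Rightarrow> nat" where
  "num_scales n \<Delta> = nat \<lfloor>log 2 (4 * real n / \<Delta>)\<rfloor> + 1"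

definition approximate_pagerank :: "(nat \<Rightarrow> nat list) \<Rightarrow> nat \<Rightarrow> real \<Rightarrow> real \<Rightarrow> (nat \<Rightarrow> real)
                                    \<Rightarrow> (nat \<times> real) list \<times> nat" where
  "approximate_pagerank out n \<alpha> \<Delta> rs =
     (let (CT, c1, p) = scale_loop out n \<alpha> \<Delta> rs 0 (num_scales n \<Delta>) [] 0;
          (A, c2) = accum n \<Delta> CT [];
          Out = filter (\<lambda>(j, a). a \<ge> \<Delta> / 4) A
      in (Out, c1 + c2 + length A + 1))"

definition running_time :: "(nat \<Rightarrow> nat list) \<Rightarrow> nat \<Rightarrow> real \<Rightarrow> real \<Rightarrow> (nat \<Rightarrow> real) \<Rightarrow> nat" where
  "running_time out n \<alpha> \<Delta> rs = snd (approximate_pagerank out n \<alpha> \<Delta> rs)"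

end

theory Submission
  imports Defs
begin

text \<open>
  A tree never holds more entries than there are walks, and the
  total number S of walks is polynomial in n, so every tree operation costs O(log n).
  At scale t there are about 2^-t (n/\<Delta>) log^2 n calls of ApproxRow, each
  running about 2^t log n walks of length O(log n / log (1/(1 - \<alpha>))); the powers of
  2 cancel, so each of the O(log n) scales costs O((n/\<Delta>) log^4 n).
  The bound holds for every out-neighbour function and every random sequence.
\<close>

lemma length_incr_le: "length (incr k xs) \<le> Suc (length xs)"
  by (induction xs) auto

lemma length_addto_le: "length (addto k x xs) \<le> Suc (length xs)"
  by (induction xs) auto

lemma bst_op_cost_mono: "s \<le> S \<Longrightarrow> bst_op_cost s \<le> bst_op_cost S"
  unfolding bst_op_cost_def by (intro nat_mono ceiling_mono) auto

lemma walk_cost_le: "fst (snd (walk out \<alpha> rs k v p)) \<le> 2 * k + 1"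
  by (induction k arbitrary: v p) (auto simp: split_def Let_def)

lemma length_row_loop_le: "length (fst (row_loop out \<alpha> rs len v j T p)) \<le> length T + j"
proof (induction j arbitrary: T p)
  case (Suc j)
  obtain res c p' where walk: "walk out \<alpha> rs len v p = (res, c, p')"
    by (metis prod_cases3)
  have IH: "length (fst (row_loop out \<alpha> rs len v j T' p')) \<le> Suc (length T + j)"
    if "length T' \<le> Suc (length T)" for T'
    using Suc.IH[of T' p'] that by simp
  show ?case
    using walk IH[of T] IH[OF length_incr_le] by (cases res) (simp_all add: split_def Let_def)
qed simp

lemma row_loop_cost_le:
  assumes "length T + j \<le> S"
  shows "fst (snd (row_loop out \<alpha> rs len v j T p)) \<le> j * (2 * len + 2 + bst_op_cost S) + 1"
  using assms
proof (induction j arbitrary: T p)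
  case (Suc j)
  obtain res c p' where walk: "walk out \<alpha> rs len v p = (res, c, p')"
    by (metis prod_cases3)
  have c: "c \<le> 2 * len + 1" using walk_cost_le[of out \<alpha> rs len v p] walk by simp
  have b: "bst_op_cost (length T) \<le> bst_op_cost S" using Suc.prems by (intro bst_op_cost_mono) simp
  have IH: "fst (snd (row_loop out \<alpha> rs len v j T' p')) \<le> j * (2 * len + 2 + bst_op_cost S) + 1"
    if "length T' \<le> Suc (length T)" for T'
    using Suc.IH[of T' p'] that Suc.prems by simp
  show ?case
  proof (cases res)
    case None
    then show ?thesis using walk c IH[of T] by (simp add: split_def Let_def)
  next
    case (Some u)
    then show ?thesis using walk c b IH[OF length_incr_le[of u T]] by (simp add: split_def Let_def)
  qed
qed simp

lemma length_approx_row_le: "length (fst (approx_row out n \<alpha> rs v \<epsilon> \<rho> p)) \<le> row_reps n \<epsilon> \<rho>"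
  using length_row_loop_le[of out \<alpha> rs "row_len \<alpha> \<epsilon>" v "row_reps n \<epsilon> \<rho>" "[]" p]
  by (simp add: approx_row_def split_def Let_def)

lemma approx_row_cost_le:
  "fst (snd (approx_row out n \<alpha> rs v \<epsilon> \<rho> p))
     \<le> (row_reps n \<epsilon> \<rho> + 1) * (2 * row_len \<alpha> \<epsilon> + 3 + bst_op_cost (row_reps n \<epsilon> \<rho>))"
  using length_row_loop_le[of out \<alpha> rs "row_len \<alpha> \<epsilon>" v "row_reps n \<epsilon> \<rho>" "[]" p]
    row_loop_cost_le[of "[]" "row_reps n \<epsilon> \<rho>" "row_reps n \<epsilon> \<rho>" out \<alpha> rs "row_len \<alpha> \<epsilon>" v p]
  by (simp add: approx_row_def split_def Let_def algebra_simps)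

lemma length_add_chunks_le: "length (fst (add_chunks t \<epsilon> L CT)) \<le> length CT + length L"
proof (induction L arbitrary: CT)
  case (Cons a L)
  obtain j x where "a = (j, x)" by fastforce
  moreover have IH: "length (fst (add_chunks t \<epsilon> L CT')) \<le> length CT + length (a # L)"
    if "length CT' \<le> Suc (length CT)" for CT'
    using Cons.IH[of CT'] that by simp
  ultimately show ?case
    using IH[of CT] IH[OF length_incr_le] by (simp add: split_def Let_def)
qed simp

lemma add_chunks_cost_le:
  assumes "length CT + length L \<le> S"
  shows "snd (add_chunks t \<epsilon> L CT) \<le> length L * (1 + bst_op_cost S) + 1"
  using assms
proof (induction L arbitrary: CT)
  case (Cons a L)
  obtain j x where a: "a = (j, x)" by fastforce
  have b: "bst_op_cost (length CT) \<le> bst_op_cost S" using Cons.prems by (intro bst_op_cost_mono) simp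
  have IH: "snd (add_chunks t \<epsilon> L CT') \<le> length L * (1 + bst_op_cost S) + 1"
    if "length CT' \<le> Suc (length CT)" for CT'
    using Cons.IH[of CT'] that Cons.prems by simp
  show ?case
    using a b IH[of CT] IH[OF length_incr_le[of "(j, t)" CT]] by (simp add: split_def Let_def)
qed simp

lemma length_accum_le: "length (fst (accum n \<Delta> CT A)) \<le> length A + length CT"
proof (induction CT arbitrary: A)
  case (Cons a CT)
  obtain j t c where "a = ((j, t), c)" by (metis prod.exhaust)
  moreover have IH: "length (fst (accum n \<Delta> CT A')) \<le> length A + length (a # CT)"
    if "length A' \<le> Suc (length A)" for A'
    using Cons.IH[of A'] that by simp
  ultimately show ?case
    using IH[of A] IH[OF length_addto_le] by (simp add: split_def Let_def)
qed simp

lemma accum_cost_le: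
  assumes "length A + length CT \<le> S"
  shows "snd (accum n \<Delta> CT A) \<le> length CT * (1 + bst_op_cost S) + 1"
  using assms
proof (induction CT arbitrary: A)
  case (Cons a CT)
  obtain j t c where a: "a = ((j, t), c)" by (metis prod.exhaust)
  have b: "bst_op_cost (length A) \<le> bst_op_cost S" using Cons.prems by (intro bst_op_cost_mono) simp
  define w where "w = \<Delta> / (2 * (1/2) ^ t * (log 2 (real n))\<^sup>2)"
  have IH: "snd (accum n \<Delta> CT A') \<le> length CT * (1 + bst_op_cost S) + 1"
    if "length A' \<le> Suc (length A)" for A'
    using Cons.IH[of A'] that Cons.prems by simp
  show ?case
    using a b IH[of A] IH[OF length_addto_le[of j w A]] by (simp add: split_def Let_def w_def)
qed simp

abbreviation row_reps_at :: "nat \<Rightarrow> nat \<Rightarrow> nat" where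
  "row_reps_at n t \<equiv> row_reps n ((1/2) ^ t / 2) (1/2)"

abbreviation row_len_at :: "real \<Rightarrow> nat \<Rightarrow> nat" where
  "row_len_at \<alpha> t \<equiv> row_len \<alpha> ((1/2) ^ t / 2)"

lemma length_chunk_loop_le:
  "length (fst (chunk_loop out n \<alpha> rs t m CT p)) \<le> length CT + m * row_reps_at n t"
proof (induction m arbitrary: CT p)
  case (Suc m)
  obtain L c p' where
    row: "approx_row out n \<alpha> rs (jump n (rs p)) ((1/2) ^ t / 2) (1/2) (Suc p) = (L, c, p')"
    by (metis prod_cases3)
  obtain CT' c' where chunks: "add_chunks t ((1/2) ^ t) L CT = (CT', c')"
    by fastforce
  have "length CT' \<le> length CT + row_reps_at n t"
    using length_add_chunks_le[of t "(1/2) ^ t" L CT] length_approx_row_le[of out n \<alpha> rs] row chunks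
    by (metis add_left_mono fst_conv le_trans)
  then show ?case
    using Suc.IH[of CT' p'] row chunks by (simp add: split_def Let_def)
qed simp

lemma chunk_loop_cost_le:
  assumes "length CT + m * row_reps_at n t \<le> S" and "row_reps_at n t \<le> S"
  shows "fst (snd (chunk_loop out n \<alpha> rs t m CT p))
           \<le> m * (row_reps_at n t + 1) * (2 * row_len_at \<alpha> t + 2 * bst_op_cost S + 6) + 1"
  using assms(1)
proof (induction m arbitrary: CT p)
  case (Suc m)
  define R where "R = row_reps_at n t"
  define l where "l = row_len_at \<alpha> t"
  define b where "b = bst_op_cost S"
  obtain L c p' where
    row: "approx_row out n \<alpha> rs (jump n (rs p)) ((1/2) ^ t / 2) (1/2) (Suc p) = (L, c, p')"
    by (metis prod_cases3)
  obtain CT' c' where chunks: "add_chunks t ((1/2) ^ t) L CT = (CT', c')"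
    by fastforce
  have L: "length L \<le> R"
    using length_approx_row_le[of out n \<alpha> rs] row unfolding R_def by (metis fst_conv)
  have "c \<le> (R + 1) * (2 * l + 3 + bst_op_cost R)"
    using approx_row_cost_le[of out n \<alpha> rs] row unfolding R_def l_def by (metis fst_conv snd_conv)
  also have "\<dots> \<le> (R + 1) * (2 * l + 3 + b)"
    unfolding R_def b_def by (intro mult_le_mono2 add_left_mono bst_op_cost_mono assms(2))
  finally have c: "c \<le> (R + 1) * (2 * l + 3 + b)" .
  have "length CT + length L \<le> S"
    using L Suc.prems unfolding R_def by simp
  then have "c' \<le> length L * (1 + b) + 1"
    using add_chunks_cost_le[of CT L S t "(1/2) ^ t"] chunks unfolding b_def by simp
  also have "\<dots> \<le> R * (1 + b) + 1"
    using L by (intro add_right_mono mult_le_mono1)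
  finally have c': "c' \<le> R * (1 + b) + 1" .
  have "length CT' + m * R \<le> S"
    using length_add_chunks_le[of t "(1/2) ^ t" L CT] chunks L Suc.prems unfolding R_def by simp
  then have IH: "fst (snd (chunk_loop out n \<alpha> rs t m CT' p')) \<le> m * (R + 1) * (2 * l + 2 * b + 6) + 1"
    using Suc.IH unfolding R_def l_def b_def by blast
  have "fst (snd (chunk_loop out n \<alpha> rs t (Suc m) CT p))
          = 2 + c + c' + fst (snd (chunk_loop out n \<alpha> rs t m CT' p'))"
    using row chunks by (simp add: split_def Let_def)
  also have "\<dots> \<le> (R + 1) * (2 * l + 3 + b) + R * (1 + b) + 4 + m * (R + 1) * (2 * l + 2 * b + 6)"
    using c c' IH by linarith
  also have "\<dots> \<le> Suc m * (R + 1) * (2 * l + 2 * b + 6) + 1"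
    by (simp add: algebra_simps)
  finally show ?case unfolding R_def l_def b_def .
qed simp

text \<open>With m = chunk_reps and r = row_reps_at, the product (m + 1)(r + 1) bounds both the
  m r walks made at scale t and the overhead of its m calls of ApproxRow.\<close>

definition scale_work :: "nat \<Rightarrow> real \<Rightarrow> nat \<Rightarrow> nat" where
  "scale_work n \<Delta> t = (chunk_reps n \<Delta> t + 1) * (row_reps_at n t + 1)"

lemma sum_atLeast_lessThan_Suc_split:
  "(\<Sum>i = t..<Suc (t + k). f i) = f t + (\<Sum>i = Suc t..<Suc (t + k). f i)"
  by (simp add: sum.atLeast_Suc_lessThan del: sum.op_ivl_Suc)

lemma length_scale_loop_le:
  "length (fst (scale_loop out n \<alpha> \<Delta> rs t k CT p))
     \<le> length CT + (\<Sum>i = t..<t + k. scale_work n \<Delta> i)"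
proof (induction k arbitrary: t CT p)
  case (Suc k)
  obtain CT' c p' where chunks: "chunk_loop out n \<alpha> rs t (chunk_reps n \<Delta> t) CT p = (CT', c, p')"
    by (metis prod_cases3)
  have "length CT' \<le> length CT + chunk_reps n \<Delta> t * row_reps_at n t"
    using length_chunk_loop_le[of out n \<alpha> rs t "chunk_reps n \<Delta> t" CT p] chunks by simp
  also have "\<dots> \<le> length CT + scale_work n \<Delta> t"
    unfolding scale_work_def by (intro add_left_mono mult_le_mono) auto
  finally show ?case
    using Suc.IH[of "Suc t" CT' p'] chunks
    by (simp add: sum_atLeast_lessThan_Suc_split split_def Let_def del: sum.op_ivl_Suc)
qed simp

lemma scale_loop_cost_le:
  assumes "length CT + (\<Sum>i = t..<t + k. scale_work n \<Delta> i) \<le> S"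
  shows "fst (snd (scale_loop out n \<alpha> \<Delta> rs t k CT p))
           \<le> (\<Sum>i = t..<t + k. scale_work n \<Delta> i * (2 * row_len_at \<alpha> i + 2 * bst_op_cost S + 6)) + 1"
  using assms
proof (induction k arbitrary: t CT p)
  case (Suc k)
  define m where "m = chunk_reps n \<Delta> t"
  define R where "R = row_reps_at n t"
  define W where "W = 2 * row_len_at \<alpha> t + 2 * bst_op_cost S + 6"
  obtain CT' c p' where chunks: "chunk_loop out n \<alpha> rs t m CT p = (CT', c, p')"
    by (metis prod_cases3)
  have work: "scale_work n \<Delta> t = (m + 1) * (R + 1)"
    by (simp add: scale_work_def m_def R_def)
  have "m * R \<le> scale_work n \<Delta> t" "R \<le> scale_work n \<Delta> t"
    unfolding work by simp_all
  then have "length CT + m * R \<le> S" "R \<le> S"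
    using Suc.prems by (simp_all add: sum_atLeast_lessThan_Suc_split del: sum.op_ivl_Suc)
  then have c: "c \<le> m * (R + 1) * W + 1"
    using chunk_loop_cost_le[of CT m n t S out \<alpha> rs p] chunks unfolding R_def W_def by simp
  have "length CT' + (\<Sum>i = Suc t..<Suc t + k. scale_work n \<Delta> i) \<le> S"
    using length_chunk_loop_le[of out n \<alpha> rs t m CT p] chunks \<open>m * R \<le> scale_work n \<Delta> t\<close> Suc.prems
    unfolding R_def by (simp add: sum_atLeast_lessThan_Suc_split del: sum.op_ivl_Suc)
  note IH = Suc.IH[OF this, of p']
  have "fst (snd (scale_loop out n \<alpha> \<Delta> rs t (Suc k) CT p))
          = c + fst (snd (scale_loop out n \<alpha> \<Delta> rs (Suc t) k CT' p')) + 1"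
    using chunks by (simp add: m_def split_def Let_def)
  also have "\<dots> \<le> (m + 1) * (R + 1) * W
      + (\<Sum>i = Suc t..<Suc t + k. scale_work n \<Delta> i * (2 * row_len_at \<alpha> i + 2 * bst_op_cost S + 6))
      + 1"
    using c IH unfolding W_def by (simp add: algebra_simps)
  finally show ?case
    by (simp add: sum_atLeast_lessThan_Suc_split work W_def del: sum.op_ivl_Suc)
qed simp

lemma running_time_le:
  fixes n l :: nat and \<Delta> :: real
  defines "N \<equiv> num_scales n \<Delta>"
  defines "S \<equiv> \<Sum>i<N. scale_work n \<Delta> i"
  defines "b \<equiv> bst_op_cost S"
  assumes row_len: "\<And>i. i < N \<Longrightarrow> row_len_at \<alpha> i \<le> l"
  shows "running_time out n \<alpha> \<Delta> rs \<le> S * (2 * l + 3 * b + 8) + 3"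
proof -
  obtain CT c p where scales: "scale_loop out n \<alpha> \<Delta> rs 0 N [] 0 = (CT, c, p)"
    by (metis prod_cases3)
  obtain A c' where acc: "accum n \<Delta> CT [] = (A, c')"
    by fastforce
  have CT: "length CT \<le> S"
    using length_scale_loop_le[of out n \<alpha> \<Delta> rs 0 N "[]" 0] scales by (simp add: atLeast0LessThan S_def)
  have "c \<le> (\<Sum>i<N. scale_work n \<Delta> i * (2 * row_len_at \<alpha> i + 2 * b + 6)) + 1"
    using scale_loop_cost_le[of "[]" n \<Delta> 0 N S out \<alpha> rs 0] scales by (simp add: atLeast0LessThan S_def b_def)
  also have "\<dots> \<le> (\<Sum>i<N. scale_work n \<Delta> i * (2 * l + 2 * b + 6)) + 1"
    using row_len by (intro add_right_mono sum_mono mult_le_mono2) simp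
  also have "\<dots> = S * (2 * l + 2 * b + 6) + 1"
    by (simp add: S_def sum_distrib_right)
  finally have c: "c \<le> S * (2 * l + 2 * b + 6) + 1" .
  have "c' \<le> length CT * (1 + b) + 1"
    using accum_cost_le[of "[]" CT S n \<Delta>] CT acc by (simp add: b_def)
  also have "\<dots> \<le> S * (1 + b) + 1"
    using CT by (intro add_right_mono mult_le_mono1)
  finally have c': "c' \<le> S * (1 + b) + 1" .
  have A: "length A \<le> S"
    using length_accum_le[of n \<Delta> CT "[]"] CT acc by simp
  have "running_time out n \<alpha> \<Delta> rs = c + c' + length A + 1"
    using scales acc by (simp add: running_time_def approximate_pagerank_def N_def Let_def)
  also have "\<dots> \<le> S * (2 * l + 3 * b + 8) + 3"
    using c c' A by (simp add: algebra_simps)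
  finally show ?thesis .
qed

lemma num_scales_le:
  assumes "1 \<le> \<Delta>" and "\<Delta> \<le> real n"
  shows "real (num_scales n \<Delta>) \<le> log 2 (real n) + 3"
proof -
  have "1 \<le> 4 * real n / \<Delta>" using assms by (simp add: field_simps)
  then have "real (num_scales n \<Delta>) \<le> log 2 (4 * real n / \<Delta>) + 1"
    unfolding num_scales_def by simp
  also have "\<dots> \<le> log 2 (4 * real n) + 1"
    using assms by (intro add_right_mono log_mono) (auto simp: field_simps)
  also have "\<dots> = log 2 (real n) + 3"
    using assms log_pow_cancel[of "2::real" 2] by (simp add: log_mult)
  finally show ?thesis .
qed

lemma two_power_le_below_num_scales:
  assumes "0 < \<Delta>" and "\<Delta> \<le> 4 * real n" and "i < num_scales n \<Delta>"
  shows "(2::real) ^ i \<le> 4 * real n / \<Delta>"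
proof -
  have ge1: "1 \<le> 4 * real n / \<Delta>" using assms by (simp add: field_simps)
  have "real i \<le> real (nat \<lfloor>log 2 (4 * real n / \<Delta>)\<rfloor>)"
    using assms(3) unfolding num_scales_def by simp
  also have "\<dots> \<le> log 2 (4 * real n / \<Delta>)"
    using ge1 by simp
  finally have "(2::real) powr real i \<le> 2 powr log 2 (4 * real n / \<Delta>)" by simp
  then show ?thesis using ge1 by (simp add: powr_realpow)
qed

lemma chunk_reps_le:
  assumes "0 \<le> \<Delta>"
  shows "real (chunk_reps n \<Delta> t) \<le> 4 * (1/2) ^ t * (real n / \<Delta>) * (log 2 (real n))\<^sup>2 + 1"
proof -
  have "0 \<le> 4 * (1/2::real) ^ t * (real n / \<Delta>) * (log 2 (real n))\<^sup>2" using assms by simp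
  then show ?thesis unfolding chunk_reps_def by linarith
qed

lemma row_reps_at_le:
  assumes "1 \<le> n"
  shows "real (row_reps_at n t) \<le> 128 * log 2 (real n) * 2 ^ t + 1"
proof -
  have "16 * log 2 (real n) / ((1/2) ^ t / 2 * (1/2)\<^sup>2) = 128 * log 2 (real n) * 2 ^ t"
    by (simp add: field_simps)
  moreover have "0 \<le> 128 * log 2 (real n) * 2 ^ t" using assms by simp
  ultimately show ?thesis unfolding row_reps_def by linarith
qed

lemma row_len_le:
  assumes "0 < \<alpha>" and "\<alpha> < 1" and "0 < \<epsilon>" and "\<epsilon> \<le> 4"
  shows "real (row_len \<alpha> \<epsilon>) \<le> log (1 / (1 - \<alpha>)) (4 / \<epsilon>) + 1"
proof -
  have "0 \<le> log (1 / (1 - \<alpha>)) (4 / \<epsilon>)" using assms by (simp add: field_simps)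
  then show ?thesis unfolding row_len_def by linarith
qed

text \<open>Here y stands for 2^t, the factor that cancels between the two counts.\<close>

lemma reps_product_le:
  fixes x y L :: real
  assumes "0 \<le> L" and "1 \<le> x" and "1 \<le> y" and "y \<le> 4 * x"
  shows "(4 * x * L\<^sup>2 / y + 2) * (128 * L * y + 2) \<le> 1548 * x * (1 + L) ^ 3"
proof -
  define B where "B = (1 + L) ^ 3"
  have B: "L \<le> B" "L\<^sup>2 \<le> B" "L ^ 3 \<le> B" "1 \<le> B"
    using assms(1) by (auto simp: B_def power3_eq_cube power2_eq_square algebra_simps)
  have "8 * x * L\<^sup>2 / y \<le> 8 * x * L\<^sup>2 / 1"
    using assms by (intro divide_left_mono) auto
  also have "\<dots> \<le> 8 * x * B"
    using B assms by simp
  finally have "8 * x * L\<^sup>2 / y \<le> 8 * x * B" .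
  moreover have "256 * L * y \<le> 1024 * x * B"
    using mult_mono[OF B(1) assms(4)] assms B by (simp add: algebra_simps)
  moreover have "512 * x * L ^ 3 \<le> 512 * x * B"
    using B assms by simp
  moreover have "4 \<le> 4 * x * B"
    using mult_mono[of 1 x 1 B] B assms by simp
  moreover have "(4 * x * L\<^sup>2 / y + 2) * (128 * L * y + 2)
                  = 512 * x * L ^ 3 + 8 * x * L\<^sup>2 / y + 256 * L * y + 4"
    using assms(3) by (simp add: field_simps power2_eq_square power3_eq_cube)
  ultimately show ?thesis unfolding B_def by linarith
qed

lemma scale_work_le:
  assumes "1 \<le> \<Delta>" and "\<Delta> \<le> real n" and "i < num_scales n \<Delta>"
  shows "real (scale_work n \<Delta> i) \<le> 1548 * (real n / \<Delta>) * (1 + log 2 (real n)) ^ 3"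
proof -
  define x where "x = real n / \<Delta>"
  define L where "L = log 2 (real n)"
  define y :: real where "y = 2 ^ i"
  have n: "1 \<le> n" using assms by simp
  have m: "real (chunk_reps n \<Delta> i) + 1 \<le> 4 * x * L\<^sup>2 / y + 2"
    using chunk_reps_le[of \<Delta> n i] assms by (simp add: x_def L_def y_def field_simps)
  have r: "real (row_reps_at n i) + 1 \<le> 128 * L * y + 2"
    using row_reps_at_le[OF n, of i] by (simp add: L_def y_def)
  have "real (scale_work n \<Delta> i) = (real (chunk_reps n \<Delta> i) + 1) * (real (row_reps_at n i) + 1)"
    by (simp add: scale_work_def algebra_simps)
  also have "\<dots> \<le> (4 * x * L\<^sup>2 / y + 2) * (128 * L * y + 2)"
    using m r of_nat_0_le_iff[of "chunk_reps n \<Delta> i"] by (intro mult_mono) linarith+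
  also have "\<dots> \<le> 1548 * x * (1 + L) ^ 3"
    using two_power_le_below_num_scales[of \<Delta> n i] assms n
    by (intro reps_product_le) (simp_all add: L_def x_def y_def field_simps)
  finally show ?thesis by (simp add: x_def L_def)
qed

lemma row_len_at_le:
  assumes "0 < \<alpha>" and "\<alpha> < 1" and "1 \<le> \<Delta>" and "\<Delta> \<le> real n" and "i < num_scales n \<Delta>"
  shows "real (row_len_at \<alpha> i) \<le> (5 / log 2 (1 / (1 - \<alpha>)) + 1) * (1 + log 2 (real n))"
proof -
  define b where "b = 1 / (1 - \<alpha>)"
  define L where "L = log 2 (real n)"
  define \<epsilon> :: real where "\<epsilon> = (1/2) ^ i / 2"
  have b: "1 < b" using assms by (simp add: b_def field_simps)
  have L: "0 \<le> L" using assms by (simp add: L_def)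
  have \<lambda>: "0 < log 2 b" using b by simp
  have "4 / \<epsilon> = 8 * (2::real) ^ i"
    by (simp add: \<epsilon>_def field_simps)
  also have "\<dots> \<le> 32 * real n"
  proof -
    have "(2::real) ^ i \<le> \<Delta> * 2 ^ i" using assms by simp
    moreover have "\<Delta> * 2 ^ i \<le> 4 * real n"
      using two_power_le_below_num_scales[of \<Delta> n i] assms by (simp add: field_simps)
    ultimately show ?thesis by linarith
  qed
  finally have "log b (4 / \<epsilon>) \<le> log b (32 * real n)"
    using b by (intro log_mono) (simp_all add: \<epsilon>_def)
  also have "\<dots> = log 2 (32 * real n) / log 2 b"
    by (rule log_base_change) simp_all
  also have "log 2 (32 * real n) = 5 + L"
    using assms log_pow_cancel[of "2::real" 5] by (simp add: log_mult L_def)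
  finally have log_le: "log b (4 / \<epsilon>) \<le> (5 + L) / log 2 b" .
  have "real (row_len_at \<alpha> i) \<le> log b (4 / \<epsilon>) + 1"
  proof -
    have "(1/2::real) ^ i \<le> 1" by (rule power_le_one) simp_all
    then show ?thesis using row_len_le[of \<alpha> \<epsilon>] assms by (simp add: b_def \<epsilon>_def)
  qed
  also have "\<dots> \<le> (5 + L) / log 2 b + 1"
    using log_le by simp
  also have "\<dots> \<le> (5 / log 2 b + 1) * (1 + L)"
  proof -
    have "L / log 2 b \<le> 5 * L / log 2 b"
      using L \<lambda> by (intro divide_right_mono) simp_all
    then show ?thesis using L by (simp add: add_divide_distrib algebra_simps)
  qed
  finally show ?thesis by (simp add: b_def L_def)
qed

lemma total_work_le:
  assumes "1 \<le> \<Delta>" and "\<Delta> \<le> real n"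
  shows "real (\<Sum>i<num_scales n \<Delta>. scale_work n \<Delta> i) \<le> 4644 * (real n / \<Delta>) * (1 + log 2 (real n)) ^ 4"
proof -
  define x where "x = real n / \<Delta>"
  define B where "B = 1 + log 2 (real n)"
  have B: "1 \<le> B" using assms by (simp add: B_def)
  have x: "0 \<le> x" using assms by (simp add: x_def)
  have "real (\<Sum>i<num_scales n \<Delta>. scale_work n \<Delta> i) \<le> (\<Sum>i<num_scales n \<Delta>. 1548 * x * B ^ 3)"
    unfolding of_nat_sum x_def B_def using scale_work_le[OF assms] by (intro sum_mono) simp
  also have "\<dots> = real (num_scales n \<Delta>) * (1548 * x * B ^ 3)"
    by simp
  also have "\<dots> \<le> (3 * B) * (1548 * x * B ^ 3)"
    using num_scales_le[OF assms] B x by (intro mult_right_mono) (simp_all add: B_def)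
  also have "\<dots> = 4644 * x * B ^ 4"
    by (simp add: power_numeral_reduce)
  finally show ?thesis by (simp add: x_def B_def)
qed

lemma log2_less_self: "1 \<le> n \<Longrightarrow> log 2 (real n) < real n"
  using log2_of_power_less[of n n] less_exp[of n] by simp

lemma bst_op_cost_le:
  assumes "1 \<le> n" and "real s + 2 \<le> 2 ^ a * real n ^ k"
  shows "real (bst_op_cost s) \<le> a + k * log 2 (real n) + 1"
proof -
  have "log 2 (real s + 2) \<le> log 2 (2 ^ a * real n ^ k)"
    using assms by (intro log_mono) simp_all
  also have "\<dots> = a + k * log 2 (real n)"
    using assms by (simp add: log_mult log_nat_power)
  finally have "log 2 (real s + 2) \<le> a + k * log 2 (real n)" .
  moreover have "0 \<le> log 2 (real s + 2)" by simp
  ultimately show ?thesis unfolding bst_op_cost_def by linarith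
qed

lemma bst_op_cost_total_work_le:
  assumes "1 \<le> \<Delta>" and "\<Delta> \<le> real n"
  shows "real (bst_op_cost (\<Sum>i<num_scales n \<Delta>. scale_work n \<Delta> i)) \<le> 18 * (1 + log 2 (real n))"
proof -
  define x where "x = real n / \<Delta>"
  define B where "B = 1 + log 2 (real n)"
  define S where "S = (\<Sum>i<num_scales n \<Delta>. scale_work n \<Delta> i)"
  have n: "1 \<le> n" and x: "1 \<le> x" "x \<le> real n" and B: "1 \<le> B" "B \<le> 2 * real n"
    using assms log2_less_self[of n] by (auto simp: x_def B_def field_simps)
  have "1 \<le> x * B ^ 4"
    using mult_mono[OF x(1) one_le_power[OF B(1)]] x(1) by simp
  moreover have "real S \<le> 4644 * x * B ^ 4"
    using total_work_le[OF assms] by (simp add: S_def x_def B_def)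
  moreover have "x * B ^ 4 \<le> real n * (2 * real n) ^ 4"
    using x B by (intro mult_mono power_mono) simp_all
  ultimately have "real S + 2 \<le> 2 ^ 17 * real n ^ 5"
    by (simp add: power_mult_distrib eval_nat_numeral)
  then have "real (bst_op_cost S) \<le> 17 + 5 * log 2 (real n) + 1"
    using bst_op_cost_le[OF n, of S 17 5] by simp
  then show ?thesis
    using B by (simp add: S_def B_def)
qed

definition running_time_const :: "real \<Rightarrow> real" where
  "running_time_const \<alpha> = 4644 * (10 / log 2 (1 / (1 - \<alpha>)) + 66) + 3"

lemma running_time_le_polylog:
  assumes "0 < \<alpha>" and "\<alpha> < 1" and "1 \<le> \<Delta>" and "\<Delta> \<le> real n"
  shows "real (running_time out n \<alpha> \<Delta> rs) \<le> running_time_const \<alpha> * (real n / \<Delta>) * (1 + log 2 (real n)) ^ 5"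
proof -
  define x where "x = real n / \<Delta>"
  define B where "B = 1 + log 2 (real n)"
  define K where "K = 5 / log 2 (1 / (1 - \<alpha>)) + 1"
  define S where "S = (\<Sum>i<num_scales n \<Delta>. scale_work n \<Delta> i)"
  define l where "l = nat \<lceil>K * B\<rceil>"
  have x: "1 \<le> x" and B: "1 \<le> B" and K: "0 \<le> K"
    using assms by (auto simp: x_def B_def K_def field_simps)
  have xB: "1 \<le> x * B ^ 5"
    using mult_mono[OF x one_le_power[OF B]] x by simp
  have S: "real S \<le> 4644 * x * B ^ 4"
    using total_work_le[OF assms(3,4)] by (simp add: S_def x_def B_def)
  have b: "real (bst_op_cost S) \<le> 18 * B"
    using bst_op_cost_total_work_le[OF assms(3,4)] by (simp add: S_def B_def)
  have l: "real l \<le> (K + 1) * B"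
    using K B by (simp add: l_def algebra_simps) linarith
  have "row_len_at \<alpha> i \<le> l" if "i < num_scales n \<Delta>" for i
  proof -
    have "real (row_len_at \<alpha> i) \<le> K * B"
      using row_len_at_le[OF assms that] by (simp add: K_def B_def)
    also have "\<dots> \<le> real l"
      unfolding l_def by (rule real_nat_ceiling_ge)
    finally show ?thesis by simp
  qed
  then have "running_time out n \<alpha> \<Delta> rs \<le> S * (2 * l + 3 * bst_op_cost S + 8) + 3"
    unfolding S_def by (rule running_time_le)
  then have "real (running_time out n \<alpha> \<Delta> rs) \<le> real S * (2 * real l + 3 * real (bst_op_cost S) + 8) + 3"
    by (metis (mono_tags) of_nat_add of_nat_mult of_nat_numeral of_nat_mono)
  also have "\<dots> \<le> (4644 * x * B ^ 4) * ((2 * K + 64) * B) + 3 * (x * B ^ 5)"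
    using S l b xB B by (intro add_mono mult_mono) (simp_all add: algebra_simps)
  also have "\<dots> = running_time_const \<alpha> * x * B ^ 5"
    by (simp add: running_time_const_def K_def algebra_simps power_numeral_reduce)
  finally show ?thesis by (simp add: x_def B_def)
qed

theorem theorem1:
  fixes \<alpha> :: real
  assumes "0 < \<alpha>" and "\<alpha> < 1"
  shows "\<exists>C k. \<forall>(n::nat) (out :: nat \<Rightarrow> nat list) (\<Delta>::real) (rs :: nat \<Rightarrow> real).
           (\<forall>v<n. out v \<noteq> [] \<and> set (out v) \<subseteq> {..<n}) \<longrightarrow>
           1 \<le> \<Delta> \<longrightarrow> \<Delta> \<le> real n \<longrightarrow>
           (\<forall>i. 0 \<le> rs i \<and> rs i < 1) \<longrightarrow>
           real (running_time out n \<alpha> \<Delta> rs) \<le> C * (real n / \<Delta>) * (1 + log 2 (real n)) ^ k"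
  using running_time_le_polylog[OF assms] by blast

end
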